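(* Let $G$ be a connected graph on $X$, let $k\ge1$, and let $A,B\in\mathcal C_k$ be such that $A\cap B$ and $A^c\cap B^c$ also belong to $\mathcal C_k$. Then $$\mathrm{nd}_k(A\cap B)+\mathrm{nd}_k(A^c\cap B^c)\le\mathrm{nd}_k(A)+\mathrm{nd}_k(B),$$ and if $A$ and $B$ are not nested, then $$\mathrm{nd}_k(A\cap B)+\mathrm{nd}_k(A^c\cap B^c)\le\mathrm{nd}_k(A)+\mathrm{nd}_k(B)-2.$$
   Context: A graph on $X$ is an irreflexive symmetric relation $G\subseteq X^2$. For $A\subseteq X$, $A^c:=X\setminus A$ and $\delta A$ is the set of edges with one endpoint in $A$ and the other in $A^c$. A cut is a set $A$ with $A$, $A^c$ infinite and $\delta A$ finite; it is neat if the induced subgraphs on $A$ and $A^c$ are connected; $\mathcal C_k$ is the set of neat cuts $A$ with $|\delta A|=k$. Sets $A,B$ are nested if one of $A\cap B$, $A\cap B^c$, $A^c\cap B$, $A^c\cap B^c$ is empty. $N_k(A)$ is the set of cuts in $\mathcal C_k$ not nested with $A$ (finite when $\delta A$ is finite), and $\mathrm{nd}_k(A):=|N_k(A)|$. *)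

theory Defs
  imports Main
begin

text \<open>A graph on X: an irreflexive symmetric relation G \<subseteq> X \<times> X.
  Complements are taken relative to X.\<close>

definition is_graph :: "'a set \<Rightarrow> ('a \<times> 'a) set \<Rightarrow> bool" where
  "is_graph X G \<longleftrightarrow> G \<subseteq> X \<times> X \<and> irrefl G \<and> sym G"

definition induced_connected :: "('a \<times> 'a) set \<Rightarrow> 'a set \<Rightarrow> bool" where
  "induced_connected G S \<longleftrightarrow> (\<forall>x\<in>S. \<forall>y\<in>S. (x, y) \<in> (G \<inter> (S \<times> S))\<^sup>*)"

definition graph_connected :: "'a set \<Rightarrow> ('a \<times> 'a) set \<Rightarrow> bool" where
  "graph_connected X G \<longleftrightarrow> induced_connected G X"

text \<open>Edge boundary: each undirected edge {x,y} with x \<in> A, y \<in> X - A is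
  represented once, as the ordered pair (x,y).\<close>
definition boundary :: "'a set \<Rightarrow> ('a \<times> 'a) set \<Rightarrow> 'a set \<Rightarrow> ('a \<times> 'a) set" where
  "boundary X G A = {(x, y) \<in> G. x \<in> A \<and> y \<in> X - A}"

definition is_cut :: "'a set \<Rightarrow> ('a \<times> 'a) set \<Rightarrow> 'a set \<Rightarrow> bool" where
  "is_cut X G A \<longleftrightarrow> A \<subseteq> X \<and> infinite A \<and> infinite (X - A) \<and> finite (boundary X G A)"

definition neat_cut :: "'a set \<Rightarrow> ('a \<times> 'a) set \<Rightarrow> 'a set \<Rightarrow> bool" where
  "neat_cut X G A \<longleftrightarrow> is_cut X G A \<and> induced_connected G A \<and> induced_connected G (X - A)"

definition neat_cuts :: "'a set \<Rightarrow> ('a \<times> 'a) set \<Rightarrow> nat \<Rightarrow> 'a set set" where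
  "neat_cuts X G k = {A. neat_cut X G A \<and> card (boundary X G A) = k}"

definition nested :: "'a set \<Rightarrow> 'a set \<Rightarrow> 'a set \<Rightarrow> bool" where
  "nested X A B \<longleftrightarrow> A \<inter> B = {} \<or> A \<inter> (X - B) = {} \<or> (X - A) \<inter> B = {} \<or> (X - A) \<inter> (X - B) = {}"

definition not_nested_set :: "'a set \<Rightarrow> ('a \<times> 'a) set \<Rightarrow> nat \<Rightarrow> 'a set \<Rightarrow> 'a set set" where
  "not_nested_set X G k A = {C \<in> neat_cuts X G k. \<not> nested X C A}"

definition nd :: "'a set \<Rightarrow> ('a \<times> 'a) set \<Rightarrow> nat \<Rightarrow> 'a set \<Rightarrow> nat" where
  "nd X G k A = card (not_nested_set X G k A)"

end

theory Submission
  imports Defs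
begin

text \<open>The two inequalities are pure counting once one knows how non-nestedness with the corners
  \<open>A \<inter> B\<close> and \<open>A\<^sup>c \<inter> B\<^sup>c\<close> relates to non-nestedness with \<open>A\<close> and \<open>B\<close>: a cut nested with both
  \<open>A\<close> and \<open>B\<close> is nested with each corner, and a cut crossing both corners crosses both \<open>A\<close> and
  \<open>B\<close>. Hence \<open>N(A \<inter> B) \<union> N(A\<^sup>c \<inter> B\<^sup>c) \<subseteq> N(A) \<union> N(B)\<close> and
  \<open>N(A \<inter> B) \<inter> N(A\<^sup>c \<inter> B\<^sup>c) \<subseteq> N(A) \<inter> N(B)\<close>; if \<open>A\<close> and \<open>B\<close> cross, the cuts \<open>A \<in> N(B)\<close> and
  \<open>B \<in> N(A)\<close> lie in neither corner set, which gives the extra 2.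
  The real work is the finiteness of \<open>N(A)\<close>, without which cardinalities are meaningless: a cut
  crossing \<open>A\<close> separates two endpoints of \<open>\<delta>A\<close>, hence cuts one of finitely many edges joining
  them, and for a fixed edge there are finitely many neat cuts with \<open>k\<close> boundary edges that cut
  it (induction on \<open>k\<close>, deleting the edge).\<close>

lemma rtrancl_finite_subset:
  assumes "(a, b) \<in> R\<^sup>*"
  shows "\<exists>F. finite F \<and> F \<subseteq> R \<and> (a, b) \<in> F\<^sup>*"
  using assms
proof (induction rule: rtrancl_induct)
  case base
  then show ?case by (intro exI[of _ "{}"]) auto
next
  case (step y z)
  then obtain F where F: "finite F" "F \<subseteq> R" "(a, y) \<in> F\<^sup>*" by blast
  have "(a, y) \<in> (insert (y, z) F)\<^sup>*" using F(3) rtrancl_mono[of F "insert (y, z) F"] by blast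
  then have "(a, z) \<in> (insert (y, z) F)\<^sup>*" by (meson insertI1 rtrancl.rtrancl_into_rtrancl)
  then show ?case using F step by (intro exI[of _ "insert (y, z) F"]) auto
qed

lemma rtrancl_leaves_set:
  assumes "(a, b) \<in> R\<^sup>*" "a \<in> D" "b \<notin> D"
  shows "\<exists>x y. (x, y) \<in> R \<and> x \<in> D \<and> y \<notin> D"
  using assms
proof (induction rule: rtrancl_induct)
  case (step y z)
  then show ?case by (cases "y \<in> D") auto
qed simp

lemma finite_connecting_subrel:
  assumes "finite V" "\<And>p q. p \<in> V \<Longrightarrow> q \<in> V \<Longrightarrow> (p, q) \<in> R\<^sup>*"
  shows "\<exists>F. finite F \<and> F \<subseteq> R \<and> (\<forall>p\<in>V. \<forall>q\<in>V. (p, q) \<in> F\<^sup>*)"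
proof -
  have "\<forall>pq \<in> V \<times> V. \<exists>F. finite F \<and> F \<subseteq> R \<and> pq \<in> F\<^sup>*"
    using rtrancl_finite_subset[OF assms(2)] by auto
  then obtain F where F: "\<And>pq. pq \<in> V \<times> V \<Longrightarrow> finite (F pq) \<and> F pq \<subseteq> R \<and> pq \<in> (F pq)\<^sup>*"
    by (metis bchoice)
  have "(p, q) \<in> (\<Union>(F ` (V \<times> V)))\<^sup>*" if "p \<in> V" "q \<in> V" for p q
    using F[of "(p, q)"] that rtrancl_mono[of "F (p, q)" "\<Union>(F ` (V \<times> V))"] by blast
  moreover have "\<Union>(F ` (V \<times> V)) \<subseteq> R" "finite (\<Union>(F ` (V \<times> V)))"
    using F assms(1) by auto
  ultimately show ?thesis by blast
qed

definition separating_cuts :: "'a set \<Rightarrow> ('a \<times> 'a) set \<Rightarrow> nat \<Rightarrow> 'a \<Rightarrow> 'a \<Rightarrow> 'a set set" where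
  "separating_cuts X G k u v = {D. D \<subseteq> X \<and> induced_connected G D \<and> induced_connected G (X - D)
     \<and> finite (boundary X G D) \<and> card (boundary X G D) = k \<and> u \<in> D \<and> v \<notin> D}"

lemma separating_cuts_delete_edge:
  assumes "(u, v) \<in> G" "v \<in> X" "D \<in> separating_cuts X G (Suc m) u v"
    and "(x, y) \<in> G - {(u, v)}" "x \<in> D" "y \<notin> D"
  shows "D \<in> separating_cuts X (G - {(u, v)}) m x y"
proof -
  have "u \<in> D" "v \<notin> D" using assms(3) unfolding separating_cuts_def by auto
  then have "G \<inter> D \<times> D = (G - {(u, v)}) \<inter> D \<times> D"
    and "G \<inter> (X - D) \<times> (X - D) = (G - {(u, v)}) \<inter> (X - D) \<times> (X - D)" by auto
  moreover have "boundary X (G - {(u, v)}) D = boundary X G D - {(u, v)}"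
    unfolding boundary_def by auto
  moreover have "(u, v) \<in> boundary X G D"
    using assms(1,2) \<open>u \<in> D\<close> \<open>v \<notin> D\<close> unfolding boundary_def by auto
  ultimately show ?thesis using assms(3-6) unfolding separating_cuts_def induced_connected_def by auto
qed

lemma separating_cut_eq_component:
  fixes X :: "'a set" and G :: "('a \<times> 'a) set" and u v :: 'a
  defines "R \<equiv> (G - {(u, v)}) \<inter> X \<times> X"
  assumes "(u, v) \<notin> R\<^sup>*" "v \<in> X" "D \<in> separating_cuts X G k u v"
  shows "D = {x \<in> X. (u, x) \<in> R\<^sup>*}"
proof -
  have D: "D \<subseteq> X" "induced_connected G D" "induced_connected G (X - D)" "u \<in> D" "v \<notin> D"
    using assms(4) unfolding separating_cuts_def by auto
  have inD: "(G \<inter> D \<times> D)\<^sup>* \<subseteq> R\<^sup>*"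
    using D(1,5) unfolding R_def by (intro rtrancl_mono) auto
  have outD: "(G \<inter> (X - D) \<times> (X - D))\<^sup>* \<subseteq> R\<^sup>*"
    using D(4) unfolding R_def by (intro rtrancl_mono) auto
  have "x \<in> D" if x: "x \<in> X" "(u, x) \<in> R\<^sup>*" for x
  proof (rule ccontr)
    assume "x \<notin> D"
    then obtain a b where ab: "(a, b) \<in> R" "a \<in> D" "b \<notin> D"
      using rtrancl_leaves_set[OF x(2) D(4)] by blast
    have "(u, a) \<in> R\<^sup>*" using D(2,4) ab(2) inD unfolding induced_connected_def by blast
    moreover have "(b, v) \<in> R\<^sup>*"
      using D(3,5) ab assms(3) outD unfolding induced_connected_def R_def by blast
    ultimately have "(u, v) \<in> R\<^sup>*" using ab(1) by (meson rtrancl_into_rtrancl rtrancl_trans)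
    with assms(2) show False by simp
  qed
  moreover have "D \<subseteq> {x \<in> X. (u, x) \<in> R\<^sup>*}"
    using D inD unfolding induced_connected_def by blast
  ultimately show ?thesis by blast
qed

lemma finite_separating_cuts:
  "(u, v) \<in> G \<Longrightarrow> v \<in> X \<Longrightarrow> finite (separating_cuts X G k u v)"
proof (induction k arbitrary: G u v)
  case 0
  have "D \<notin> separating_cuts X G 0 u v" for D
  proof
    assume "D \<in> separating_cuts X G 0 u v"
    then have "(u, v) \<in> boundary X G D" "finite (boundary X G D)" "card (boundary X G D) = 0"
      using 0 unfolding separating_cuts_def boundary_def by auto
    then show False by simp
  qed
  then have "separating_cuts X G 0 u v = {}" by blast
  then show ?case by simp
next
  case (Suc m)
  define R where "R = (G - {(u, v)}) \<inter> X \<times> X"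
  show ?case
  proof (cases "(u, v) \<in> R\<^sup>*")
    case True
    text \<open>Every such cut also cuts an edge of a finite \<open>u\<close>-\<open>v\<close> path avoiding \<open>(u, v)\<close>.\<close>
    obtain F where F: "finite F" "F \<subseteq> R" "(u, v) \<in> F\<^sup>*"
      using rtrancl_finite_subset[OF True] by blast
    have "separating_cuts X G (Suc m) u v
        \<subseteq> (\<Union>e\<in>F. separating_cuts X (G - {(u, v)}) m (fst e) (snd e))"
    proof
      fix D assume D: "D \<in> separating_cuts X G (Suc m) u v"
      then have "u \<in> D" "v \<notin> D" unfolding separating_cuts_def by auto
      then obtain x y where xy: "(x, y) \<in> F" "x \<in> D" "y \<notin> D"
        using rtrancl_leaves_set[OF F(3)] by blast
      have "(x, y) \<in> G - {(u, v)}" using xy(1) F(2) unfolding R_def by blast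
      from separating_cuts_delete_edge[OF Suc.prems D this xy(2,3)] xy(1)
      show "D \<in> (\<Union>e\<in>F. separating_cuts X (G - {(u, v)}) m (fst e) (snd e))"
        by (intro UN_I[of "(x, y)"]) auto
    qed
    moreover have "finite (separating_cuts X (G - {(u, v)}) m (fst e) (snd e))" if "e \<in> F" for e
      using that F(2) unfolding R_def by (intro Suc.IH) auto
    ultimately show ?thesis using F(1) by (meson finite_UN_I finite_subset)
  next
    case False
    then have "separating_cuts X G (Suc m) u v \<subseteq> {{x \<in> X. (u, x) \<in> R\<^sup>*}}"
      using separating_cut_eq_component[OF _ Suc.prems(2)] unfolding R_def by blast
    then show ?thesis using finite_subset by blast
  qed
qed

lemma finite_not_nested_set:
  assumes "graph_connected X G" "A \<subseteq> X" "finite (boundary X G A)"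
  shows "finite (not_nested_set X G k A)"
proof -
  define V where "V = fst ` boundary X G A"
  have "V \<subseteq> X" unfolding V_def boundary_def using assms(2) by auto
  have "finite V" unfolding V_def using assms(3) by simp
  moreover have "(p, q) \<in> (G \<inter> X \<times> X)\<^sup>*" if "p \<in> V" "q \<in> V" for p q
    using assms(1) that \<open>V \<subseteq> X\<close> unfolding graph_connected_def induced_connected_def by blast
  ultimately have "\<exists>F. finite F \<and> F \<subseteq> G \<inter> X \<times> X \<and> (\<forall>p\<in>V. \<forall>q\<in>V. (p, q) \<in> F\<^sup>*)"
    by (rule finite_connecting_subrel)
  then obtain F where F: "finite F" "F \<subseteq> G \<inter> X \<times> X" "\<forall>p\<in>V. \<forall>q\<in>V. (p, q) \<in> F\<^sup>*"
    by blast
  have "not_nested_set X G k A \<subseteq> (\<Union>e\<in>F. separating_cuts X G k (fst e) (snd e))"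
  proof
    fix D assume "D \<in> not_nested_set X G k A"
    then have D: "D \<subseteq> X" "induced_connected G D" "induced_connected G (X - D)"
      "finite (boundary X G D)" "card (boundary X G D) = k" "\<not> nested X D A"
      unfolding not_nested_set_def neat_cuts_def neat_cut_def is_cut_def by auto
    text \<open>Both sides of \<open>D\<close> meet both \<open>A\<close> and its complement, so each side contains an
      endpoint in \<open>A\<close> of an edge of \<open>\<delta>A\<close>.\<close>
    have meets_V: "\<exists>a\<in>V. a \<in> S"
      if S: "S \<subseteq> X" "induced_connected G S" "S \<inter> A \<noteq> {}" "S \<inter> (X - A) \<noteq> {}" for S
    proof -
      obtain p q where "p \<in> S \<inter> A" "q \<in> S \<inter> (X - A)" using S(3,4) by blast
      then have "(p, q) \<in> (G \<inter> S \<times> S)\<^sup>*" "p \<in> A" "q \<notin> A"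
        using S(2) unfolding induced_connected_def by auto
      then obtain a b where "(a, b) \<in> G \<inter> S \<times> S" "a \<in> A" "b \<notin> A"
        using rtrancl_leaves_set[of p q "G \<inter> S \<times> S" A] by blast
      with S(1) show ?thesis unfolding V_def boundary_def by (auto intro!: bexI[of _ a] image_eqI)
    qed
    have "D \<inter> A \<noteq> {}" "D \<inter> (X - A) \<noteq> {}" "(X - D) \<inter> A \<noteq> {}" "(X - D) \<inter> (X - A) \<noteq> {}"
      using D(6) unfolding nested_def by blast+
    then obtain a1 a2 where "a1 \<in> V" "a1 \<in> D" "a2 \<in> V" "a2 \<notin> D"
      using meets_V[of D] meets_V[of "X - D"] D(1-3) by blast
    then obtain x y where xy: "(x, y) \<in> F" "x \<in> D" "y \<notin> D"
      using F(3) rtrancl_leaves_set[of a1 a2 F D] by blast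
    with D have "D \<in> separating_cuts X G k x y" unfolding separating_cuts_def by blast
    with xy(1) show "D \<in> (\<Union>e\<in>F. separating_cuts X G k (fst e) (snd e))"
      by (intro UN_I[of "(x, y)"]) auto
  qed
  moreover have "finite (separating_cuts X G k (fst e) (snd e))" if "e \<in> F" for e
    using that F(2) by (intro finite_separating_cuts) auto
  ultimately show ?thesis using F(1) by (meson finite_UN_I finite_subset)
qed

lemma card_add_card_le:
  assumes "finite M" "finite N" "P \<union> Q \<union> S \<subseteq> M \<union> N" "P \<inter> Q \<subseteq> M \<inter> N" "S \<inter> (P \<union> Q) = {}"
  shows "card P + card Q + card S \<le> card M + card N"
proof -
  have fin: "finite P" "finite Q" "finite S"
    using assms(1-3) by (meson finite_Un finite_subset le_sup_iff)+
  have "card P + card Q + card S = card (P \<union> Q \<union> S) + card (P \<inter> Q)"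
    using fin assms(5) by (simp add: card_Un_Int[of P Q] card_Un_disjoint Int_commute)
  also have "\<dots> \<le> card (M \<union> N) + card (M \<inter> N)"
    using assms(1-4) by (intro add_mono card_mono) auto
  also have "\<dots> = card M + card N"
    using assms(1,2) by (rule card_Un_Int[symmetric])
  finally show ?thesis .
qed

lemma neat_cuts_subset: "C \<in> neat_cuts X G k \<Longrightarrow> C \<subseteq> X"
  unfolding neat_cuts_def neat_cut_def is_cut_def by blast

lemma not_nested_set_Int_subset:
  assumes "A \<subseteq> X" "B \<subseteq> X" "(X - A) \<inter> (X - B) \<noteq> {}"
  shows "not_nested_set X G k (A \<inter> B) \<subseteq> not_nested_set X G k A \<union> not_nested_set X G k B"
proof
  fix C assume "C \<in> not_nested_set X G k (A \<inter> B)"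
  then have C: "C \<in> neat_cuts X G k" "\<not> nested X C (A \<inter> B)" unfolding not_nested_set_def by auto
  then have "\<not> nested X C A \<or> \<not> nested X C B"
    using neat_cuts_subset[OF C(1)] assms unfolding nested_def by blast
  with C(1) show "C \<in> not_nested_set X G k A \<union> not_nested_set X G k B"
    unfolding not_nested_set_def by blast
qed

lemma not_nested_set_compl_Int_subset:
  assumes "A \<subseteq> X" "B \<subseteq> X" "A \<inter> B \<noteq> {}"
  shows "not_nested_set X G k ((X - A) \<inter> (X - B))
    \<subseteq> not_nested_set X G k A \<union> not_nested_set X G k B"
proof
  fix C assume "C \<in> not_nested_set X G k ((X - A) \<inter> (X - B))"
  then have C: "C \<in> neat_cuts X G k" "\<not> nested X C ((X - A) \<inter> (X - B))"
    unfolding not_nested_set_def by auto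
  then have "\<not> nested X C A \<or> \<not> nested X C B"
    using neat_cuts_subset[OF C(1)] assms unfolding nested_def by blast
  with C(1) show "C \<in> not_nested_set X G k A \<union> not_nested_set X G k B"
    unfolding not_nested_set_def by blast
qed

lemma not_nested_set_Int_compl_Int:
  assumes "A \<subseteq> X" "B \<subseteq> X"
  shows "not_nested_set X G k (A \<inter> B) \<inter> not_nested_set X G k ((X - A) \<inter> (X - B))
    \<subseteq> not_nested_set X G k A \<inter> not_nested_set X G k B"
proof
  fix C assume "C \<in> not_nested_set X G k (A \<inter> B) \<inter> not_nested_set X G k ((X - A) \<inter> (X - B))"
  then have C: "C \<in> neat_cuts X G k" "\<not> nested X C (A \<inter> B)" "\<not> nested X C ((X - A) \<inter> (X - B))"
    unfolding not_nested_set_def by auto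
  then have "\<not> nested X C A" "\<not> nested X C B"
    using neat_cuts_subset[OF C(1)] assms unfolding nested_def by blast+
  with C(1) show "C \<in> not_nested_set X G k A \<inter> not_nested_set X G k B"
    unfolding not_nested_set_def by blast
qed

lemma not_nested_set_corners_exclude:
  "{A, B} \<inter> (not_nested_set X G k (A \<inter> B) \<union> not_nested_set X G k ((X - A) \<inter> (X - B))) = {}"
  unfolding not_nested_set_def nested_def by blast

lemma crossing_in_not_nested_sets:
  assumes "A \<in> neat_cuts X G k" "B \<in> neat_cuts X G k" "\<not> nested X A B"
  shows "{A, B} \<subseteq> not_nested_set X G k A \<union> not_nested_set X G k B" "card {A, B} = 2"
proof -
  have "\<not> nested X B A" using assms(3) unfolding nested_def by blast
  with assms show "{A, B} \<subseteq> not_nested_set X G k A \<union> not_nested_set X G k B"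
    unfolding not_nested_set_def by blast
  have "A \<noteq> B" using assms(3) unfolding nested_def by blast
  then show "card {A, B} = 2" by simp
qed

theorem mainTheorem18:
  fixes X :: "'a set" and G :: "('a \<times> 'a) set" and k :: nat and A B :: "'a set"
  assumes "is_graph X G" and "graph_connected X G" and "k \<ge> 1"
    and "A \<in> neat_cuts X G k" and "B \<in> neat_cuts X G k"
    and "A \<inter> B \<in> neat_cuts X G k"
    and "(X - A) \<inter> (X - B) \<in> neat_cuts X G k"
  shows "nd X G k (A \<inter> B) + nd X G k ((X - A) \<inter> (X - B)) \<le> nd X G k A + nd X G k B
       \<and> (\<not> nested X A B \<longrightarrow>
         nd X G k (A \<inter> B) + nd X G k ((X - A) \<inter> (X - B)) + 2 \<le> nd X G k A + nd X G k B)"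
proof -
  let ?N = "not_nested_set X G k"
  have X: "A \<subseteq> X" "B \<subseteq> X" using neat_cuts_subset[OF assms(4)] neat_cuts_subset[OF assms(5)] .
  have fin: "finite (?N A)" "finite (?N B)"
    using assms(2,4,5) X unfolding neat_cuts_def neat_cut_def is_cut_def
    by (auto intro!: finite_not_nested_set)
  have "A \<inter> B \<noteq> {}" "(X - A) \<inter> (X - B) \<noteq> {}"
    using assms(6,7) unfolding neat_cuts_def neat_cut_def is_cut_def by auto
  then have cover: "?N (A \<inter> B) \<union> ?N ((X - A) \<inter> (X - B)) \<subseteq> ?N A \<union> ?N B"
    using not_nested_set_Int_subset[OF X] not_nested_set_compl_Int_subset[OF X] by blast
  note meet = not_nested_set_Int_compl_Int[OF X]
  have "nd X G k (A \<inter> B) + nd X G k ((X - A) \<inter> (X - B)) \<le> nd X G k A + nd X G k B"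
    using card_add_card_le[OF fin _ meet, of "{}"] cover unfolding nd_def by simp
  moreover have "nd X G k (A \<inter> B) + nd X G k ((X - A) \<inter> (X - B)) + 2 \<le> nd X G k A + nd X G k B"
    if "\<not> nested X A B"
    using card_add_card_le[OF fin _ meet not_nested_set_corners_exclude] cover
      crossing_in_not_nested_sets[OF assms(4,5) that] unfolding nd_def by simp
  ultimately show ?thesis by blast
qed

end
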